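(* Let $\Bbbk$ be a field with $\mathrm{char}(\Bbbk)\ne2$, $n\ge2$, $\mathbb{H}_{2^n}$ the Nichols Hopf algebra and $A$ a unital associative $\Bbbk$-algebra. Let $\cdot:\mathbb{H}_{2^n}\otimes A\to A$ be a partial action with $g\cdot1_A=0$ and $x_i\cdot1_A\in Z(A)$ for all $i\in\{1,\dots,n-1\}$. Then for all $a\in A$ and $i\in\{1,\dots,n-1\}$, $$gx_i\cdot a=x_i\cdot a=(x_i\cdot1_A)a,$$ and $gx_{i_1}x_{i_2}\cdots x_{i_s}\cdot a=x_{i_1}x_{i_2}\cdots x_{i_s}\cdot a=0$ for all $s\ge2$ and $i_1,\dots,i_s\in\{1,\dots,n-1\}$.
   Context: $\mathbb{H}_{2^n}$ is the Hopf algebra generated by $g,x_1,\dots,x_{n-1}$ with relations $g^2=1$, $x_i^2=0$, $x_ig=-gx_i$, $x_ix_j=-x_jx_i$, $g$ group-like, $\Delta(x_i)=x_i\otimes1+g\otimes x_i$, $\varepsilon(x_i)=0$. $Z(A)$ is the center of $A$. A partial action of a bialgebra $H$ on $A$ is a linear map $\cdot:H\otimes A\to A$ with $1_H\cdot a=a$, $h\cdot(ab)=(h_1\cdot a)(h_2\cdot b)$, $h\cdot(k\cdot a)=(h_1\cdot1_A)(h_2k\cdot a)$. *)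

theory Defs
  imports Main "HOL.Modules"
begin

text \<open>Concrete model of the Nichols Hopf algebra H_{2^n} over a field 'k.
  Basis: g^e x_S with e :: bool (g^0 or g^1) and S a subset of {1..n-1};
  x_S = x_{s1} x_{s2} ... x_{sk} with s1 < s2 < ... < sk.\<close>

type_synonym 'k hel = "bool \<times> nat set \<Rightarrow> 'k"

definition hbasis :: "nat \<Rightarrow> (bool \<times> nat set) set" where
  "hbasis n = UNIV \<times> Pow {1..<n}"

definition Hset :: "nat \<Rightarrow> ('k::field) hel set" where
  "Hset n = {h. \<forall>b. b \<notin> hbasis n \<longrightarrow> h b = 0}"

definition hb :: "bool \<times> nat set \<Rightarrow> ('k::field) hel" where
  "hb b = (\<lambda>c. if c = b then 1 else 0)"

definition hone :: "('k::field) hel" where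
  "hone = hb (False, {})"

definition hg :: "('k::field) hel" where
  "hg = hb (True, {})"

definition hx :: "nat \<Rightarrow> ('k::field) hel" where
  "hx i = hb (False, {i})"

definition ninv :: "nat set \<Rightarrow> nat set \<Rightarrow> nat" where
  "ninv S T = card {(s, t). s \<in> S \<and> t \<in> T \<and> t < s}"

text \<open>(g^e x_S)(g^f x_T) = (-1)^(f|S|) g^(e+f) x_S x_T, and
  x_S x_T = 0 if S, T meet, else (-1)^(ninv S T) x_(S \<union> T).\<close>
definition hmul_basis :: "bool \<times> nat set \<Rightarrow> bool \<times> nat set \<Rightarrow> ('k::field) hel" where
  "hmul_basis b c = (case b of (e, S) \<Rightarrow> case c of (f, T) \<Rightarrow>
     if S \<inter> T = {} then
       (\<lambda>d. (- 1) ^ (card S * (if f then 1 else 0) + ninv S T) * hb (e \<noteq> f, S \<union> T) d)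
     else (\<lambda>d. 0))"

definition hmul :: "nat \<Rightarrow> ('k::field) hel \<Rightarrow> 'k hel \<Rightarrow> 'k hel" where
  "hmul n h k = (\<lambda>d. \<Sum>b\<in>hbasis n. \<Sum>c\<in>hbasis n. h b * k c * hmul_basis b c d)"

text \<open>Comultiplication on basis elements:
  Delta(g^e x_S) = sum over T \<subseteq> S of
    (-1)^(N(T, S-T)) g^(e + |S-T|) x_T \<otimes> g^e x_(S-T),
  where N(T,U) = #{(t,u) in T x U. t < u}.  This is the unique algebra map
  with Delta(g) = g\<otimes>g, Delta(x_i) = x_i\<otimes>1 + g\<otimes>x_i.
  dcoef b p q is the coefficient of (basis p) \<otimes> (basis q) in Delta(basis b).\<close>
definition dcoef :: "bool \<times> nat set \<Rightarrow> bool \<times> nat set \<Rightarrow> bool \<times> nat set \<Rightarrow> 'k::field" where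
  "dcoef b p q = (case b of (e, S) \<Rightarrow> case p of (e1, T) \<Rightarrow> case q of (e2, U) \<Rightarrow>
     if T \<subseteq> S \<and> U = S - T \<and> e1 = (e \<noteq> odd (card U)) \<and> e2 = e
     then (- 1) ^ card {(t, u). t \<in> T \<and> u \<in> U \<and> t < u} else 0)"

definition hcomul :: "nat \<Rightarrow> ('k::field) hel \<Rightarrow> bool \<times> nat set \<Rightarrow> bool \<times> nat set \<Rightarrow> 'k" where
  "hcomul n h p q = (\<Sum>b\<in>hbasis n. h b * dcoef b p q)"

definition xprod :: "nat \<Rightarrow> nat list \<Rightarrow> ('k::field) hel" where
  "xprod n is = foldr (\<lambda>i h. hmul n (hx i) h) is hone"

definition k_algebra :: "('k::field \<Rightarrow> 'a::ring_1 \<Rightarrow> 'a) \<Rightarrow> bool" where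
  "k_algebra smult \<longleftrightarrow> module smult \<and>
     (\<forall>c a b. smult c (a * b) = smult c a * b \<and> smult c (a * b) = a * smult c b)"

text \<open>A partial action of H_{2^n} on A: a linear map H \<otimes> A \<rightarrow> A
  (i.e. bilinear act on Hset n \<times> A) with the three axioms; Sweedler sums are
  expanded in the basis.\<close>
definition partial_action ::
  "nat \<Rightarrow> ('k::field \<Rightarrow> 'a::ring_1 \<Rightarrow> 'a) \<Rightarrow> ('k hel \<Rightarrow> 'a \<Rightarrow> 'a) \<Rightarrow> bool" where
  "partial_action n smult act \<longleftrightarrow>
     (\<forall>h\<in>Hset n. \<forall>h'\<in>Hset n. \<forall>a. act (\<lambda>d. h d + h' d) a = act h a + act h' a) \<and>
     (\<forall>h\<in>Hset n. \<forall>c a. act (\<lambda>d. c * h d) a = smult c (act h a)) \<and>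
     (\<forall>h\<in>Hset n. \<forall>a b. act h (a + b) = act h a + act h b) \<and>
     (\<forall>h\<in>Hset n. \<forall>c a. act h (smult c a) = smult c (act h a)) \<and>
     (\<forall>a. act hone a = a) \<and>
     (\<forall>h\<in>Hset n. \<forall>a b. act h (a * b) =
        (\<Sum>p\<in>hbasis n. \<Sum>q\<in>hbasis n. smult (hcomul n h p q) (act (hb p) a * act (hb q) b))) \<and>
     (\<forall>h\<in>Hset n. \<forall>k\<in>Hset n. \<forall>a. act h (act k a) =
        (\<Sum>p\<in>hbasis n. \<Sum>q\<in>hbasis n.
           smult (hcomul n h p q) (act (hb p) 1 * act (hmul n (hb q) k) a)))"

end

theory Submission
  imports Defs
begin

text \<open>From \<open>\<Delta>(x\<^sub>i) = x\<^sub>i \<otimes> 1 + g \<otimes> x\<^sub>i\<close>,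
  \<open>\<Delta>(gx\<^sub>i) = gx\<^sub>i \<otimes> g + 1 \<otimes> gx\<^sub>i\<close> and \<open>g\<cdot>1 = 0\<close>, the
  multiplicativity axiom gives \<open>x\<^sub>i\<cdot>a = (x\<^sub>i\<cdot>1) a\<close> and
  \<open>gx\<^sub>i\<cdot>a = a (gx\<^sub>i\<cdot>1)\<close>, and the composition axiom gives
  \<open>gx\<^sub>i\<cdot>(k\<cdot>a) = (gx\<^sub>i\<cdot>1)(gk\<cdot>a) + (gx\<^sub>i k)\<cdot>a\<close>.
  For \<open>k = g\<close>, where \<open>gx\<^sub>i g = -x\<^sub>i\<close>, this yields \<open>gx\<^sub>i\<cdot>1 = x\<^sub>i\<cdot>1\<close>;
  so, \<open>x\<^sub>i\<cdot>1\<close> being central, \<open>gx\<^sub>i\<cdot>b = (x\<^sub>i\<cdot>1) b\<close> for every \<open>b\<close>.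
  If \<open>gy\<cdot>a = y\<cdot>a\<close> for all \<open>a\<close>, the choices \<open>k = gy\<close> and \<open>k = y\<close> now
  cancel the left-hand side against \<open>(gx\<^sub>i\<cdot>1)(gk\<cdot>a)\<close> and leave
  \<open>x\<^sub>i y\<cdot>a = 0\<close> and \<open>gx\<^sub>i y\<cdot>a = 0\<close>.\<close>

definition hgx :: "nat \<Rightarrow> ('k::field) hel" where
  "hgx i = hb (True, {i})"

lemma mem_hbasis_iff [simp]: "(e, S) \<in> hbasis n \<longleftrightarrow> S \<subseteq> {1..<n}"
  unfolding hbasis_def by auto

lemma finite_hbasis [simp]: "finite (hbasis n)"
  unfolding hbasis_def by simp

lemma Hset_outside: "k \<in> Hset n \<Longrightarrow> d \<notin> hbasis n \<Longrightarrow> k d = 0"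
  unfolding Hset_def by blast

lemma hb_in_Hset: "b \<in> hbasis n \<Longrightarrow> (hb b :: 'k::field hel) \<in> Hset n"
  unfolding Hset_def hb_def by (auto simp del: mem_hbasis_iff)

lemma hmul_basis_eq:
  "(hmul_basis (e0, R) (f, T) (e, S) :: 'k::field) =
     (if f = (e0 \<noteq> e) \<and> R \<subseteq> S \<and> T = S - R
      then (- 1) ^ (card R * of_bool f + ninv R T) else 0)"
proof -
  have "(R \<inter> T = {} \<and> (e0 \<noteq> f, R \<union> T) = (e, S)) \<longleftrightarrow> (f = (e0 \<noteq> e) \<and> R \<subseteq> S \<and> T = S - R)"
    by auto
  then show ?thesis
    unfolding hmul_basis_def hb_def by (auto simp: of_bool_def)
qed

lemma hmul_hb_left:
  assumes "(e0, R) \<in> hbasis n"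
  shows "hmul n (hb (e0, R)) k (e, S) =
    (if S \<subseteq> {1..<n} \<and> R \<subseteq> S
     then (- 1) ^ (card R * of_bool (e0 \<noteq> e) + ninv R (S - R)) * k (e0 \<noteq> e, S - R) else 0)"
proof -
  have "hmul n (hb (e0, R)) k (e, S) = (\<Sum>b\<in>hbasis n. if b = (e0, R)
      then (\<Sum>c\<in>hbasis n. k c * hmul_basis b c (e, S)) else 0)"
    unfolding hmul_def hb_def by (rule sum.cong) auto
  also have "\<dots> = (\<Sum>c\<in>hbasis n. if c = (e0 \<noteq> e, S - R) \<and> R \<subseteq> S
      then (- 1) ^ (card R * of_bool (e0 \<noteq> e) + ninv R (S - R)) * k c else 0)"
    using assms by (auto intro: sum.cong simp: hmul_basis_eq)
  also have "\<dots> = (if S \<subseteq> {1..<n} \<and> R \<subseteq> S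
     then (- 1) ^ (card R * of_bool (e0 \<noteq> e) + ninv R (S - R)) * k (e0 \<noteq> e, S - R) else 0)"
    using assms by (cases "R \<subseteq> S") auto
  finally show ?thesis .
qed

lemma hmul_in_Hset:
  fixes h k :: "'k::field hel"
  shows "hmul n h k \<in> Hset n"
  unfolding Hset_def
proof (intro CollectI allI impI)
  fix d assume d: "d \<notin> hbasis n"
  have "hmul_basis b c d = (0 :: 'k)" if "b \<in> hbasis n" "c \<in> hbasis n" for b c
    using that d by (cases b, cases c, cases d) (auto simp: hmul_basis_eq)
  then show "hmul n h k d = 0"
    unfolding hmul_def by simp
qed

lemma hone_apply: "hone (e, S) = of_bool (\<not> e \<and> S = {})"
  unfolding hone_def hb_def by auto

lemma hg_apply: "hg (e, S) = of_bool (e \<and> S = {})"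
  unfolding hg_def hb_def by auto

lemma hx_apply: "hx i (e, S) = of_bool (\<not> e \<and> S = {i})"
  unfolding hx_def hb_def by auto

lemma hgx_apply: "hgx i (e, S) = of_bool (e \<and> S = {i})"
  unfolding hgx_def hb_def by auto

lemma hone_in_Hset: "hone \<in> Hset n"
  unfolding hone_def by (simp add: hb_in_Hset)

lemma hg_in_Hset: "hg \<in> Hset n"
  unfolding hg_def by (simp add: hb_in_Hset)

lemma hx_in_Hset: "i \<in> {1..<n} \<Longrightarrow> hx i \<in> Hset n"
  unfolding hx_def by (simp add: hb_in_Hset)

lemma hgx_in_Hset: "i \<in> {1..<n} \<Longrightarrow> hgx i \<in> Hset n"
  unfolding hgx_def by (simp add: hb_in_Hset)

lemma xprod_in_Hset: "xprod n L \<in> Hset n"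
  by (cases L) (simp_all add: xprod_def hone_in_Hset hmul_in_Hset)

lemma hmul_hg_left: "hmul n hg k (e, S) = (if S \<subseteq> {1..<n} then k (\<not> e, S) else 0)"
  unfolding hg_def by (simp add: hmul_hb_left ninv_def)

lemma hmul_hx_left:
  assumes "i \<in> {1..<n}"
  shows "hmul n (hx i) k (e, S) = (if S \<subseteq> {1..<n} \<and> i \<in> S
    then (- 1) ^ (of_bool e + ninv {i} (S - {i})) * k (e, S - {i}) else 0)"
  using assms unfolding hx_def by (simp add: hmul_hb_left)

lemma hmul_hgx_left:
  assumes "i \<in> {1..<n}"
  shows "hmul n (hgx i) k (e, S) = (if S \<subseteq> {1..<n} \<and> i \<in> S
    then (- 1) ^ (of_bool (\<not> e) + ninv {i} (S - {i})) * k (\<not> e, S - {i}) else 0)"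
  using assms unfolding hgx_def by (simp add: hmul_hb_left)

lemma hmul_hg_hmul_hg: "k \<in> Hset n \<Longrightarrow> hmul n hg (hmul n hg k) = k"
  by (rule ext) (auto simp: hmul_hg_left Hset_outside)

lemma hmul_hgx_eq: "i \<in> {1..<n} \<Longrightarrow> hmul n (hgx i) k = hmul n hg (hmul n (hx i) k)"
  by (rule ext) (auto simp: hmul_hg_left hmul_hx_left hmul_hgx_left)

lemma hmul_hgx_hmul_hg:
  "i \<in> {1..<n} \<Longrightarrow> hmul n (hgx i) (hmul n hg k) = (\<lambda>d. - hmul n (hx i) k d)"
  by (rule ext) (auto simp: hmul_hg_left hmul_hx_left hmul_hgx_left)

lemma hmul_hg_hx: "i \<in> {1..<n} \<Longrightarrow> hmul n hg (hx i) = hgx i"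
  by (rule ext) (auto simp: hmul_hg_left hx_apply hgx_apply)

lemma hmul_hx_hone: "i \<in> {1..<n} \<Longrightarrow> hmul n (hx i) hone = hx i"
  by (rule ext) (auto simp: hmul_hx_left hx_apply hone_apply ninv_def cong: conj_cong)

lemma hmul_hg_hone: "hmul n hg hone = hg"
  by (rule ext) (auto simp: hmul_hg_left hg_apply hone_apply)

lemma xprod_Cons: "xprod n (i # L) = hmul n (hx i) (xprod n L)"
  by (simp add: xprod_def)

lemma xprod_singleton: "i \<in> {1..<n} \<Longrightarrow> xprod n [i] = hx i"
  by (simp add: xprod_def hmul_hx_hone)

lemma hcomul_hb: "b \<in> hbasis n \<Longrightarrow> hcomul n (hb b) p q = dcoef b p q"
proof -
  assume "b \<in> hbasis n"
  moreover have "hcomul n (hb b) p q = (\<Sum>c\<in>hbasis n. if c = b then dcoef c p q else 0)"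
    unfolding hcomul_def hb_def by (rule sum.cong) auto
  ultimately show ?thesis
    by simp
qed

lemma hcomul_hx:
  "i \<in> {1..<n} \<Longrightarrow>
    hcomul n (hx i) p q =
      of_bool ((p, q) \<in> {((False, {i}), (False, {})), ((True, {}), (False, {i}))})"
  unfolding hx_def
  by (cases p, cases q) (auto simp: hcomul_hb dcoef_def subset_singleton_iff cong: conj_cong)

lemma hcomul_hgx:
  "i \<in> {1..<n} \<Longrightarrow>
    hcomul n (hgx i) p q =
      of_bool ((p, q) \<in> {((True, {i}), (True, {})), ((False, {}), (True, {i}))})"
  unfolding hgx_def
  by (cases p, cases q) (auto simp: hcomul_hb dcoef_def subset_singleton_iff cong: conj_cong)

lemma (in module) sum_sum_scale_of_bool:
  assumes "finite B" and "P \<subseteq> B \<times> B"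
  shows "(\<Sum>p\<in>B. \<Sum>q\<in>B. scale (of_bool ((p, q) \<in> P)) (F p q)) = (\<Sum>(p, q)\<in>P. F p q)"
proof -
  have "(\<Sum>p\<in>B. \<Sum>q\<in>B. scale (of_bool ((p, q) \<in> P)) (F p q))
      = (\<Sum>x\<in>B \<times> B. if x \<in> P then case_prod F x else 0)"
    by (auto simp: sum.cartesian_product case_prod_unfold intro!: sum.cong)
  also have "\<dots> = (\<Sum>(p, q)\<in>P. F p q)"
    using assms by (simp add: sum.inter_restrict [symmetric] Int_absorb1 finite_cartesian_product)
  finally show ?thesis .
qed

locale nichols_partial_action = module smult
  for smult :: "'k::field \<Rightarrow> 'a::ring_1 \<Rightarrow> 'a" +
  fixes n :: nat and act :: "'k hel \<Rightarrow> 'a \<Rightarrow> 'a"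
  assumes partial_action: "partial_action n smult act"
begin

lemma act_hone: "act hone a = a"
  using partial_action unfolding partial_action_def by blast

lemma act_add_right: "h \<in> Hset n \<Longrightarrow> act h (a + b) = act h a + act h b"
  using partial_action unfolding partial_action_def by blast

lemma act_zero_right: "h \<in> Hset n \<Longrightarrow> act h 0 = 0"
  using act_add_right [of h 0 0] by simp

lemma act_uminus_left:
  assumes "h \<in> Hset n"
  shows "act (\<lambda>d. - h d) a = - act h a"
proof -
  have "act (\<lambda>d. (- 1) * h d) a = smult (- 1) (act h a)"
    using partial_action assms unfolding partial_action_def by blast
  then show ?thesis
    by simp
qed

lemma act_mult_if_hcomul:
  assumes "h \<in> Hset n" and "\<And>p q. hcomul n h p q = of_bool ((p, q) \<in> P)"
    and "P \<subseteq> hbasis n \<times> hbasis n"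
  shows "act h (a * b) = (\<Sum>(p, q)\<in>P. act (hb p) a * act (hb q) b)"
  using partial_action assms unfolding partial_action_def
  by (simp add: sum_sum_scale_of_bool)

lemma act_act_if_hcomul:
  assumes "h \<in> Hset n" and "k \<in> Hset n" and "\<And>p q. hcomul n h p q = of_bool ((p, q) \<in> P)"
    and "P \<subseteq> hbasis n \<times> hbasis n"
  shows "act h (act k a) = (\<Sum>(p, q)\<in>P. act (hb p) 1 * act (hmul n (hb q) k) a)"
  using partial_action assms unfolding partial_action_def
  by (simp add: sum_sum_scale_of_bool)

lemma act_hx_mult:
  assumes "i \<in> {1..<n}"
  shows "act (hx i) (a * b) = act (hx i) a * b + act hg a * act (hx i) b"
  using assms
  by (subst act_mult_if_hcomul [OF hx_in_Hset hcomul_hx])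
    (simp_all add: hx_def hg_def hone_def [symmetric] act_hone)

lemma act_hgx_mult:
  assumes "i \<in> {1..<n}"
  shows "act (hgx i) (a * b) = act (hgx i) a * act hg b + a * act (hgx i) b"
  using assms
  by (subst act_mult_if_hcomul [OF hgx_in_Hset hcomul_hgx])
    (simp_all add: hgx_def hg_def hone_def [symmetric] act_hone)

lemma act_hgx_act:
  assumes "i \<in> {1..<n}" and "k \<in> Hset n"
  shows "act (hgx i) (act k a) = act (hgx i) 1 * act (hmul n hg k) a + act (hmul n (hgx i) k) a"
  using assms
  by (subst act_act_if_hcomul [OF hgx_in_Hset assms(2) hcomul_hgx])
    (simp_all add: hgx_def hg_def hone_def [symmetric] act_hone)

lemma act_hgx_act_hmul_hg:
  assumes "i \<in> {1..<n}" and "y \<in> Hset n"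
  shows "act (hgx i) (act (hmul n hg y) a) = act (hgx i) 1 * act y a - act (hmul n (hx i) y) a"
  using act_hgx_act [OF assms(1) hmul_in_Hset, of hg y a] assms
  by (simp add: hmul_hg_hmul_hg hmul_hgx_hmul_hg act_uminus_left hmul_in_Hset)

end

locale g_annihilating_partial_action = nichols_partial_action +
  assumes act_hg_one: "act hg 1 = 0"
begin

lemma act_hx: "i \<in> {1..<n} \<Longrightarrow> act (hx i) a = act (hx i) 1 * a"
  using act_hx_mult [of i 1 a] by (simp add: act_hg_one)

lemma act_hgx: "i \<in> {1..<n} \<Longrightarrow> act (hgx i) a = a * act (hgx i) 1"
  using act_hgx_mult [of i a 1] by (simp add: act_hg_one)

lemma act_hgx_one:
  assumes "i \<in> {1..<n}"
  shows "act (hgx i) 1 = act (hx i) 1"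
proof -
  have "act (hgx i) (act (hmul n hg hone) 1) = 0"
    using assms by (simp add: hmul_hg_hone act_hg_one act_zero_right hgx_in_Hset)
  then show ?thesis
    using act_hgx_act_hmul_hg [OF assms hone_in_Hset, of 1]
    by (simp add: act_hone hmul_hx_hone [OF assms])
qed

end

locale central_partial_action = g_annihilating_partial_action +
  assumes act_hx_one_central: "i \<in> {1..<n} \<Longrightarrow> act (hx i) 1 * b = b * act (hx i) 1"
begin

lemma act_hgx_eq_act_hx:
  assumes "i \<in> {1..<n}"
  shows "act (hgx i) a = act (hx i) a"
proof -
  have "act (hgx i) a = a * act (hx i) 1"
    using act_hgx [OF assms, of a] by (simp add: act_hgx_one [OF assms])
  also have "\<dots> = act (hx i) a"
    using act_hx_one_central [OF assms, of a] act_hx [OF assms, of a] by simp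
  finally show ?thesis .
qed

lemma act_hmul_hx_eq_0:
  assumes i: "i \<in> {1..<n}" and y: "y \<in> Hset n"
    and g_invariant: "\<And>a. act (hmul n hg y) a = act y a"
  shows "act (hmul n (hx i) y) a = 0"
proof -
  have "act (hmul n (hx i) y) a = act (hgx i) 1 * act y a - act (hgx i) (act (hmul n hg y) a)"
    using act_hgx_act_hmul_hg [OF i y, of a] by simp
  also have "\<dots> = 0"
    using i by (simp only: g_invariant act_hgx [of i "act y a"] act_hgx_one act_hx_one_central
        diff_self)
  finally show ?thesis .
qed

lemma act_hmul_hg_hmul_hx_eq_0:
  assumes i: "i \<in> {1..<n}" and y: "y \<in> Hset n"
    and g_invariant: "\<And>a. act (hmul n hg y) a = act y a"
  shows "act (hmul n hg (hmul n (hx i) y)) a = 0"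
proof -
  have "act (hmul n hg (hmul n (hx i) y)) a = act (hgx i) (act y a) - act (hgx i) 1 * act y a"
    using act_hgx_act [OF i y, of a] by (simp add: g_invariant hmul_hgx_eq [OF i])
  also have "\<dots> = 0"
    using i by (simp only: act_hgx [of i "act y a"] act_hgx_one act_hx_one_central diff_self)
  finally show ?thesis .
qed

lemma act_hmul_hg_xprod:
  "L \<noteq> [] \<Longrightarrow> set L \<subseteq> {1..<n} \<Longrightarrow> act (hmul n hg (xprod n L)) a = act (xprod n L) a"
proof (induction L arbitrary: a)
  case Nil
  then show ?case by simp
next
  case (Cons i L)
  then have i: "i \<in> {1..<n}" by simp
  show ?case
  proof (cases "L = []")
    case True
    then show ?thesis
      using i by (simp add: xprod_singleton hmul_hg_hx act_hgx_eq_act_hx)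
  next
    case False
    then have "\<And>a. act (hmul n hg (xprod n L)) a = act (xprod n L) a"
      using Cons by simp
    then show ?thesis
      using i by (simp add: xprod_Cons act_hmul_hx_eq_0 act_hmul_hg_hmul_hx_eq_0 xprod_in_Hset)
  qed
qed

lemma act_xprod_eq_0:
  assumes "2 \<le> length L" and "set L \<subseteq> {1..<n}"
  shows "act (xprod n L) a = 0"
proof -
  obtain i L' where L: "L = i # L'" and "L' \<noteq> []"
    using assms(1) by (auto simp: numeral_2_eq_2 Suc_le_length_iff)
  with assms(2) have i: "i \<in> {1..<n}"
    and g_invariant: "\<And>a. act (hmul n hg (xprod n L')) a = act (xprod n L') a"
    by (simp_all add: act_hmul_hg_xprod)
  show ?thesis
    unfolding L xprod_Cons by (rule act_hmul_hx_eq_0 [OF i xprod_in_Hset g_invariant])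
qed

end

lemma central_partial_actionI:
  assumes "k_algebra smult" and "partial_action n smult act" and "act hg 1 = 0"
    and "\<forall>i\<in>{1..<n}. \<forall>b. act (hx i) 1 * b = b * act (hx i) 1"
  shows "central_partial_action smult n act"
proof intro_locales
  show "module smult"
    using assms(1) by (simp add: k_algebra_def)
  show "nichols_partial_action_axioms smult n act"
    using assms(2) by unfold_locales
  show "g_annihilating_partial_action_axioms act"
    using assms(3) by unfold_locales
  show "central_partial_action_axioms n act"
    using assms(4) by unfold_locales blast
qed

theorem proposition4p3:
  fixes n :: nat
    and smult :: "'k::field \<Rightarrow> 'a::ring_1 \<Rightarrow> 'a"
    and act :: "'k hel \<Rightarrow> 'a \<Rightarrow> 'a"
  assumes char: "(2::'k) \<noteq> 0"
    and n2: "n \<ge> 2"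
    and alg: "k_algebra smult"
    and pa: "partial_action n smult act"
    and g1: "act hg 1 = 0"
    and central: "\<forall>i\<in>{1..<n}. \<forall>b. act (hx i) 1 * b = b * act (hx i) 1"
  shows "(\<forall>a. \<forall>i\<in>{1..<n}.
            act (hmul n hg (hx i)) a = act (hx i) a \<and> act (hx i) a = act (hx i) 1 * a) \<and>
         (\<forall>a. \<forall>is. length is \<ge> 2 \<longrightarrow> set is \<subseteq> {1..<n} \<longrightarrow>
            act (hmul n hg (xprod n is)) a = act (xprod n is) a \<and> act (xprod n is) a = 0)"
proof -
  interpret central_partial_action smult n act
    using alg pa g1 central by (rule central_partial_actionI)
  show ?thesis
  proof (intro conjI allI ballI impI)
    fix a i
    assume i: "i \<in> {1..<n}"
    show "act (hmul n hg (hx i)) a = act (hx i) a"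
      using act_hgx_eq_act_hx [OF i] by (simp add: hmul_hg_hx [OF i])
    show "act (hx i) a = act (hx i) 1 * a"
      by (rule act_hx [OF i])
  next
    fix a L
    assume length: "2 \<le> length L" and set: "set L \<subseteq> {1..<n}"
    then have "L \<noteq> []"
      by auto
    then show "act (hmul n hg (xprod n L)) a = act (xprod n L) a"
      using set by (rule act_hmul_hg_xprod)
    show "act (xprod n L) a = 0"
      using length set by (rule act_xprod_eq_0)
  qed
qed

end
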